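(* In the setting below, there exists a sequence $t_n\to\infty$ such that $\varphi_{t_n}$ converges almost everywhere on $A$ to a finite function $\varphi$.
   Context: Setting: $d\ge2$, $A\subset\mathbb{R}^d$ compact convex, $\mu=\varrho_0\,dx$ a probability measure on $A$ equivalent to Lebesgue measure on $A$, $B_r=\{|x|\le r\}$, $\nu=\varrho_1\,dx$ a probability measure on $B_r$ equivalent to Lebesgue measure on $B_r$. For $t\ge0$ let $S_t(x)=x|x|^t$ and let $W_t$ be the convex function on $A$ such that $\nabla W_t$ is the (Brenier) optimal transport map for quadratic cost pushing $\mu$ forward to $\nu\circ S_t^{-1}$, normalized by $\min_A W_t=0$. Define $\varphi_t\ge0$ by $W_t=\frac{1}{t+2}\varphi_t^{t+2}$. *)

theory Defs
  imports "HOL-Probability.Probability"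
begin

definition S_pow :: "real \<Rightarrow> 'a::euclidean_space \<Rightarrow> 'a" where
  "S_pow t x = (norm x powr t) *\<^sub>R x"

text \<open>W is a convex function on A whose gradient (defined mu-a.e.) is a transport map
  pushing mu = rho0 dx forward to the image of nu = rho1 dx under S_t, i.e. (by Brenier's
  theorem) W is the Brenier potential of the quadratic optimal transport problem;
  normalised so that min over A of W is 0.\<close>
definition brenier_potential ::
  "'a::euclidean_space set \<Rightarrow> ('a \<Rightarrow> real) \<Rightarrow> ('a \<Rightarrow> real) \<Rightarrow> real \<Rightarrow> ('a \<Rightarrow> real) \<Rightarrow> bool" where
  "brenier_potential A rho0 rho1 t W \<longleftrightarrow>
     convex_on A W \<and>
     (\<forall>x\<in>A. 0 \<le> W x) \<and> (\<exists>x\<in>A. W x = 0) \<and>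
     (\<exists>G :: 'a \<Rightarrow> 'a.
        G \<in> borel_measurable (density lebesgue (\<lambda>x. ennreal (rho0 x))) \<and>
        (AE x in density lebesgue (\<lambda>x. ennreal (rho0 x)).
            (W has_derivative (\<lambda>h. G x \<bullet> h)) (at x)) \<and>
        distr (density lebesgue (\<lambda>x. ennreal (rho0 x))) borel G =
        distr (density lebesgue (\<lambda>x. ennreal (rho1 x))) borel (S_pow t))"

text \<open>phi_t \<ge> 0 defined by W_t = phi_t^(t+2)/(t+2).\<close>
definition phi_of :: "('a \<Rightarrow> real) \<Rightarrow> real \<Rightarrow> 'a \<Rightarrow> real" where
  "phi_of W t x = ((t + 2) * W x) powr (1 / (t + 2))"

end

theory Submission
  imports Defs "HOL-Library.Diagonal_Subsequence"
begin

text \<open>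
  For integer times t = n the functions f_n = phi_n on A are
  quasiconvex (their sublevel sets are convex, since phi_n is an increasing
  function of the convex potential W_n) and uniformly bounded almost everywhere
  on A: the Brenier map is a.e. bounded by r^(n+1) because it pushes mu onto
  a measure supported in the ball of radius r^(n+1), so the gradient inequality
  gives W_n <= r^(n+1) diam A, and the (n+2)-th root tames the exponential growth.
  A Helly-type selection theorem for quasiconvex functions then yields an a.e.
  convergent subsequence: encoding the strict sublevel sets L_c of f_n by the
  1-Lipschitz truncated distance functions to L_c, a diagonal argument over the
  rational levels c and a dense countable set of points makes them converge
  everywhere; their zero sets are convex with Lebesgue-null frontiers, and off
  these frontiers every rational level c is eventually decided for f_n(x),
  which forces convergence of f_n(x).
\<close>

text \<open>A bounded real sequence converges if for every rational level c it is eventually below c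
  or eventually above c: otherwise a rational between liminf and limsup is undecided.\<close>
lemma convergent_if_eventually_decided:
  fixes X :: "nat \<Rightarrow> real"
  assumes bounded: "\<And>n. \<bar>X n\<bar> \<le> M"
    and decided: "\<And>c. c \<in> \<rat> \<Longrightarrow>
       (\<forall>\<^sub>F n in sequentially. X n < c) \<or> (\<forall>\<^sub>F n in sequentially. c \<le> X n)"
  shows "convergent X"
proof -
  have "limsup X \<le> liminf X"
  proof (rule ccontr)
    assume "\<not> limsup X \<le> liminf X"
    then obtain a b where ab: "liminf X < ereal a" "ereal a < ereal b" "ereal b < limsup X"
      by (metis ereal_dense2 not_le)
    then obtain c where c: "c \<in> \<rat>" "a < c" "c < b"
      using Rats_dense_in_real by auto
    from decided[OF c(1)] show False
    proof
      assume "\<forall>\<^sub>F n in sequentially. X n < c"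
      then have "limsup X \<le> ereal c"
        by (intro Limsup_bounded) (auto elim: eventually_mono)
      with ab(3) have "ereal b < ereal c" by (rule less_le_trans)
      with c(3) show False by simp
    next
      assume "\<forall>\<^sub>F n in sequentially. c \<le> X n"
      then have "ereal c \<le> liminf X"
        by (intro Liminf_bounded) (auto elim: eventually_mono)
      with ab(1) have "ereal c < ereal a" by (rule le_less_trans[rotated])
      with c(2) show False by simp
    qed
  qed
  moreover have "ereal (- M) \<le> liminf X" "limsup X \<le> ereal M"
    using bounded by (auto intro!: Liminf_bounded Limsup_bounded simp: abs_le_iff minus_le_iff)
  ultimately obtain L where "limsup X = ereal L" "liminf X = ereal L"
    using Liminf_le_Limsup[of sequentially X]
    by (cases "limsup X") (auto intro: antisym)
  then have "X \<longlonglongrightarrow> L"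
    by (intro limsup_le_liminf_real) auto
  then show ?thesis by (auto simp: convergent_def)
qed

lemma bounded_subseq_convergent_countable:
  fixes g :: "'i \<Rightarrow> nat \<Rightarrow> real"
  assumes I: "countable I" and bounded: "\<And>i n. i \<in> I \<Longrightarrow> \<bar>g i n\<bar> \<le> B"
  shows "\<exists>s. strict_mono s \<and> (\<forall>i\<in>I. convergent (\<lambda>n. g i (s n)))"
proof (cases "I = {}")
  case True
  then show ?thesis using strict_mono_id by blast
next
  case False
  define ix where "ix = from_nat_into I"
  have ix_in: "ix k \<in> I" for k
    using False by (simp add: ix_def from_nat_into)
  interpret subseqs "\<lambda>k s. convergent (\<lambda>n. g (ix k) (s n))"
  proof
    fix k and s :: "nat \<Rightarrow> nat"
    have "\<And>n. g (ix k) (s n) \<in> {-B..B}"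
      using bounded[OF ix_in] by (simp add: abs_le_iff minus_le_iff)
    then obtain l s' where "strict_mono s'" "((\<lambda>n. g (ix k) (s n)) \<circ> s') \<longlonglongrightarrow> l"
      using compact_Icc compact_imp_seq_compact seq_compactE by metis
    then show "\<exists>s'. strict_mono s' \<and> convergent (\<lambda>n. g (ix k) ((s \<circ> s') n))"
      by (auto simp: convergent_def comp_def)
  qed
  have "convergent (\<lambda>n. g (ix k) (diagseq n))" for k
  proof -
    have "convergent (\<lambda>n. g (ix k) ((diagseq \<circ> (+) (Suc k)) n))"
      by (rule diagseq_holds) (auto simp: comp_def intro: convergent_subseq_convergent[unfolded comp_def])
    then obtain L where "(\<lambda>n. g (ix k) (diagseq (n + Suc k))) \<longlonglongrightarrow> L"
      by (auto simp: add.commute convergent_def)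
    then have "(\<lambda>n. g (ix k) (diagseq n)) \<longlonglongrightarrow> L"
      by (rule LIMSEQ_offset)
    then show ?thesis
      by (auto simp: convergent_def)
  qed
  moreover have "\<exists>k. i = ix k" if "i \<in> I" for i
    using from_nat_into_to_nat_on[OF I that] by (metis ix_def)
  ultimately show ?thesis
    using subseq_diagseq by blast
qed

lemma lipschitz_convergent_from_dense:
  fixes h :: "nat \<Rightarrow> 'a::metric_space \<Rightarrow> real"
  assumes lipschitz: "\<And>n x y. \<bar>h n x - h n y\<bar> \<le> dist x y"
    and dense: "\<And>x \<epsilon>. 0 < \<epsilon> \<Longrightarrow> \<exists>q\<in>D. dist x q < \<epsilon>"
    and convergent_on_D: "\<And>q. q \<in> D \<Longrightarrow> convergent (\<lambda>n. h n q)"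
  shows "convergent (\<lambda>n. h n x)"
proof -
  have "Cauchy (\<lambda>n. h n x)"
  proof (rule metric_CauchyI)
    fix \<epsilon> :: real assume "0 < \<epsilon>"
    then obtain q where q: "q \<in> D" "dist x q < \<epsilon> / 3"
      using dense[of "\<epsilon> / 3"] by auto
    have "Cauchy (\<lambda>n. h n q)"
      using convergent_on_D[OF q(1)] by (rule convergent_Cauchy)
    then obtain N where N: "\<And>m n. N \<le> m \<Longrightarrow> N \<le> n \<Longrightarrow> dist (h m q) (h n q) < \<epsilon> / 3"
      using \<open>0 < \<epsilon>\<close> metric_CauchyD[of "\<lambda>n. h n q" "\<epsilon> / 3"] by auto
    have "dist (h m x) (h n x) < \<epsilon>" if "N \<le> m" "N \<le> n" for m n
      using lipschitz[of m x q] lipschitz[of n x q] N[OF that] q(2)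
      unfolding dist_real_def by linarith
    then show "\<exists>N. \<forall>m\<ge>N. \<forall>n\<ge>N. dist (h m x) (h n x) < \<epsilon>"
      by blast
  qed
  then show ?thesis by (simp add: Cauchy_convergent_iff)
qed

lemma lipschitz_family_subseq_convergent:
  fixes g :: "'i \<Rightarrow> nat \<Rightarrow> 'a::{metric_space,second_countable_topology} \<Rightarrow> real"
  assumes I: "countable I"
    and bounded: "\<And>i n x. i \<in> I \<Longrightarrow> \<bar>g i n x\<bar> \<le> B"
    and lipschitz: "\<And>i n x y. i \<in> I \<Longrightarrow> \<bar>g i n x - g i n y\<bar> \<le> dist x y"
  shows "\<exists>s. strict_mono s \<and> (\<forall>i\<in>I. \<forall>x. convergent (\<lambda>n. g i (s n) x))"
proof -
  obtain D :: "'a set" where D: "countable D" "\<And>X. open X \<Longrightarrow> X \<noteq> {} \<Longrightarrow> \<exists>d\<in>D. d \<in> X"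
    using countable_dense_setE by blast
  have dense: "\<exists>q\<in>D. dist x q < \<epsilon>" if "0 < \<epsilon>" for x \<epsilon>
    using D(2)[of "ball x \<epsilon>"] that by auto
  obtain s where s: "strict_mono s" "\<forall>p\<in>I \<times> D. convergent (\<lambda>n. g (fst p) (s n) (snd p))"
    using bounded_subseq_convergent_countable[of "I \<times> D" "\<lambda>p n. g (fst p) n (snd p)" B]
      I D(1) bounded by auto
  have "convergent (\<lambda>n. g i (s n) x)" if "i \<in> I" for i x
    using lipschitz_convergent_from_dense[of "\<lambda>n. g i (s n)" D] lipschitz[OF that] dense s(2) that
    by auto
  with s(1) show ?thesis by blast
qed

text \<open>Given a point x outside a convex set L, one can move away from x by any distance rho
  (along the normal of a separating hyperplane) and end up at distance at least rho from L.\<close>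
lemma convex_far_point:
  fixes L :: "'a::euclidean_space set"
  assumes "convex L" "L \<noteq> {}" "x \<notin> L" "0 < \<rho>"
  shows "\<exists>p. dist p x = \<rho> \<and> (\<forall>y\<in>L. \<rho> \<le> dist p y)"
proof -
  obtain a b where a: "a \<noteq> 0" "a \<bullet> x \<le> b" "\<And>y. y \<in> L \<Longrightarrow> b \<le> a \<bullet> y"
    using separating_hyperplane_set_point_inaff[OF assms(1-3)] by metis
  define u where "u = a /\<^sub>R norm a"
  have u: "norm u = 1"
    using a(1) by (simp add: u_def)
  define p where "p = x - \<rho> *\<^sub>R u"
  have "\<rho> \<le> dist p y" if "y \<in> L" for y
  proof -
    have "u \<bullet> x \<le> u \<bullet> y"
      using a(2) a(3)[OF that] by (simp add: u_def mult_left_mono)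
    then have "\<rho> \<le> u \<bullet> (y - p)"
      using u by (simp add: p_def inner_diff_right dot_square_norm)
    also have "\<dots> \<le> norm u * norm (y - p)"
      by (rule norm_cauchy_schwarz)
    finally show ?thesis
      using u by (simp add: dist_norm norm_minus_commute)
  qed
  moreover have "dist p x = \<rho>"
    using u assms(4) by (simp add: p_def dist_norm)
  ultimately show ?thesis by blast
qed

text \<open>The distance to L truncated at 1 (and equal to 1 for empty L). It is a bounded 1-Lipschitz
  encoding of the set L, used to extract convergent subsequences of sets.\<close>
definition trunc_dist :: "'a::metric_space set \<Rightarrow> 'a \<Rightarrow> real" where
  "trunc_dist L x = (if L = {} then 1 else min 1 (infdist x L))"

lemma trunc_dist_bounds: "0 \<le> trunc_dist L x \<and> trunc_dist L x \<le> 1"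
  by (simp add: trunc_dist_def infdist_nonneg)

lemma trunc_dist_lipschitz: "\<bar>trunc_dist L x - trunc_dist L y\<bar> \<le> dist x y"
  using infdist_triangle_abs[of x L y] by (auto simp: trunc_dist_def min_def abs_le_iff)

lemma trunc_dist_pos_imp_notin: "0 < trunc_dist L x \<Longrightarrow> x \<notin> L"
  by (auto simp: trunc_dist_def split: if_splits)

lemma trunc_dist_le_dist: "a \<in> L \<Longrightarrow> trunc_dist L x \<le> dist x a"
  using infdist_le[of a L x] by (auto simp: trunc_dist_def)

lemma trunc_dist_less_imp_near:
  assumes "trunc_dist L x < \<delta>" "\<delta> \<le> 1"
  shows "\<exists>a\<in>L. dist x a < \<delta>"
proof -
  have "L \<noteq> {}" "infdist x L < \<delta>"
    using assms by (auto simp: trunc_dist_def min_def split: if_splits)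
  then show ?thesis by (simp add: infdist_notempty cINF_less_iff)
qed

lemma trunc_dist_far_point:
  fixes L :: "'a::euclidean_space set"
  assumes "convex L" "x \<notin> L" "0 < \<rho>" "\<rho> \<le> 1"
  shows "\<exists>p. dist p x = \<rho> \<and> \<rho> \<le> trunc_dist L p"
proof (cases "L = {}")
  case True
  obtain p :: 'a where "dist p x = \<rho>"
    using vector_choose_dist[of \<rho> x] assms(3) by (auto simp: dist_commute)
  then show ?thesis using True assms(4) by (auto simp: trunc_dist_def)
next
  case False
  obtain p where p: "dist p x = \<rho>" "\<forall>y\<in>L. \<rho> \<le> dist p y"
    using convex_far_point[OF assms(1) False assms(2,3)] by blast
  then have "\<rho> \<le> infdist p L"
    using False by (simp add: infdist_notempty le_cINF_iff)
  then show ?thesis using p(1) assms(4) False by (auto simp: trunc_dist_def)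
qed

lemma trunc_dist_convex_combination:
  fixes L :: "'a::real_normed_vector set"
  assumes L: "convex L" and xy: "trunc_dist L x < \<delta>" "trunc_dist L y < \<delta>" and "\<delta> \<le> 1"
    and uv: "0 \<le> u" "0 \<le> v" "u + v = 1"
  shows "trunc_dist L (u *\<^sub>R x + v *\<^sub>R y) \<le> \<delta>"
proof -
  obtain a b where a: "a \<in> L" "dist x a < \<delta>" and b: "b \<in> L" "dist y b < \<delta>"
    using trunc_dist_less_imp_near[OF xy(1) \<open>\<delta> \<le> 1\<close>]
      trunc_dist_less_imp_near[OF xy(2) \<open>\<delta> \<le> 1\<close>] by blast
  have "(u *\<^sub>R x + v *\<^sub>R y) - (u *\<^sub>R a + v *\<^sub>R b) = u *\<^sub>R (x - a) + v *\<^sub>R (y - b)"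
    by (simp add: algebra_simps)
  then have "dist (u *\<^sub>R x + v *\<^sub>R y) (u *\<^sub>R a + v *\<^sub>R b) \<le> u * dist x a + v * dist y b"
    using uv by (metis dist_norm norm_triangle_ineq norm_scaleR abs_of_nonneg)
  also have "\<dots> \<le> u * \<delta> + v * \<delta>"
    using a(2) b(2) uv by (intro add_mono mult_left_mono) auto
  also have "\<dots> = \<delta>"
    using uv by (simp add: distrib_right[symmetric])
  finally show ?thesis
    using trunc_dist_le_dist[of "u *\<^sub>R a + v *\<^sub>R b" L] a(1) b(1) uv L
    by (meson convexD order.trans)
qed

lemma trunc_dist_limit_nonneg:
  assumes "(\<lambda>n. trunc_dist (L n) x) \<longlonglongrightarrow> e"
  shows "0 \<le> e"
  by (rule LIMSEQ_le_const[OF assms]) (use trunc_dist_bounds in auto)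

lemma trunc_dist_limit_zero_set_convex:
  fixes L :: "nat \<Rightarrow> 'a::real_normed_vector set"
  assumes convex: "\<And>n. convex (L n)"
    and lim: "\<And>x. (\<lambda>n. trunc_dist (L n) x) \<longlonglongrightarrow> E x"
  shows "convex {x. E x = 0}"
proof (rule convexI)
  fix x y :: 'a and u v :: real
  assume "x \<in> {x. E x = 0}" "y \<in> {x. E x = 0}" and uv: "0 \<le> u" "0 \<le> v" "u + v = 1"
  then have E0: "E x = 0" "E y = 0" by auto
  define z where "z = u *\<^sub>R x + v *\<^sub>R y"
  have small: "E z \<le> \<delta>" if \<delta>: "0 < \<delta>" "\<delta> \<le> 1" for \<delta>
  proof (rule tendsto_upperbound[OF lim])
    have "\<forall>\<^sub>F n in sequentially. trunc_dist (L n) x < \<delta>"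
      using lim[of x] E0(1) \<delta>(1) by (simp add: order_tendstoD(2))
    moreover have "\<forall>\<^sub>F n in sequentially. trunc_dist (L n) y < \<delta>"
      using lim[of y] E0(2) \<delta>(1) by (simp add: order_tendstoD(2))
    ultimately show "\<forall>\<^sub>F n in sequentially. trunc_dist (L n) z \<le> \<delta>"
      unfolding z_def
      by eventually_elim (rule trunc_dist_convex_combination[OF convex _ _ \<delta>(2) uv])
  qed simp
  have "E z = 0"
  proof (rule ccontr)
    assume "E z \<noteq> 0"
    with trunc_dist_limit_nonneg[OF lim] have "0 < E z"
      by (simp add: order_less_le)
    with small[of "min 1 (E z / 2)"] show False by auto
  qed
  then show "u *\<^sub>R x + v *\<^sub>R y \<in> {x. E x = 0}" by (simp add: z_def)
qed

text \<open>Points in the interior of the zero set are eventually in L_n: otherwise a far point on a small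
  sphere around x, combined with a finite cover of that sphere, contradicts the convergence to 0.\<close>
lemma trunc_dist_limit_interior:
  fixes L :: "nat \<Rightarrow> 'a::euclidean_space set"
  assumes convex: "\<And>n. convex (L n)"
    and lim: "\<And>x. (\<lambda>n. trunc_dist (L n) x) \<longlonglongrightarrow> E x"
    and x: "x \<in> interior {x. E x = 0}"
  shows "\<forall>\<^sub>F n in sequentially. x \<in> L n"
proof -
  obtain \<epsilon> where \<epsilon>: "0 < \<epsilon>" "ball x \<epsilon> \<subseteq> {x. E x = 0}"
    using x by (meson mem_interior)
  define \<rho> where "\<rho> = min (\<epsilon> / 2) 1"
  have \<rho>: "0 < \<rho>" "\<rho> \<le> 1" "\<rho> < \<epsilon>"
    using \<epsilon>(1) by (auto simp: \<rho>_def)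
  have cover: "sphere x \<rho> \<subseteq> (\<Union>q\<in>sphere x \<rho>. ball q (\<rho> / 4))"
    using \<rho>(1) by force
  obtain F where F: "F \<subseteq> sphere x \<rho>" "finite F" "sphere x \<rho> \<subseteq> (\<Union>q\<in>F. ball q (\<rho> / 4))"
    using compactE_image[OF compact_sphere _ cover] by blast
  have "\<forall>\<^sub>F n in sequentially. trunc_dist (L n) q < \<rho> / 4" if "q \<in> F" for q
  proof -
    have "q \<in> ball x \<epsilon>"
      using that F(1) \<rho>(3) by auto
    then have "E q = 0"
      using \<epsilon>(2) by blast
    then show ?thesis
      using lim[of q] \<rho>(1) by (intro order_tendstoD(2)) auto
  qed
  then have "\<forall>\<^sub>F n in sequentially. \<forall>q\<in>F. trunc_dist (L n) q < \<rho> / 4"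
    using F(2) by (simp add: eventually_ball_finite)
  then show ?thesis
  proof eventually_elim
    case (elim n)
    show "x \<in> L n"
    proof (rule ccontr)
      assume "x \<notin> L n"
      then obtain p where p: "dist p x = \<rho>" "\<rho> \<le> trunc_dist (L n) p"
        using trunc_dist_far_point[OF convex] \<rho>(1,2) by blast
      then have "p \<in> sphere x \<rho>"
        by (simp add: dist_commute)
      then obtain q where q: "q \<in> F" "p \<in> ball q (\<rho> / 4)"
        using F(3) by blast
      have "\<bar>trunc_dist (L n) p - trunc_dist (L n) q\<bar> \<le> dist q p"
        using trunc_dist_lipschitz[of "L n" p q] by (simp add: dist_commute)
      moreover have "trunc_dist (L n) q < \<rho> / 4"
        using elim q(1) by blast
      ultimately show False
        using q(2) p(2) by simp
    qed
  qed
qed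

text \<open>Off the frontier of the zero set of E, membership of x in L_n is eventually constant:
  inside the zero set by the previous lemma, outside it because then the distances stay positive.\<close>
lemma trunc_dist_limit_decides_membership:
  fixes L :: "nat \<Rightarrow> 'a::euclidean_space set"
  assumes convex: "\<And>n. convex (L n)"
    and lim: "\<And>x. (\<lambda>n. trunc_dist (L n) x) \<longlonglongrightarrow> E x"
    and x: "x \<notin> frontier {x. E x = 0}"
  shows "(\<forall>\<^sub>F n in sequentially. x \<in> L n) \<or> (\<forall>\<^sub>F n in sequentially. x \<notin> L n)"
proof (cases "x \<in> interior {x. E x = 0}")
  case True
  then show ?thesis using trunc_dist_limit_interior[OF convex lim] by blast
next
  case False
  with x have "x \<notin> closure {x. E x = 0}"
    by (simp add: frontier_def)
  then have "E x \<noteq> 0"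
    using closure_subset[of "{x. E x = 0}"] by blast
  moreover have "0 \<le> E x"
    by (rule trunc_dist_limit_nonneg[OF lim])
  ultimately have "0 < E x"
    by simp
  then have "\<forall>\<^sub>F n in sequentially. 0 < trunc_dist (L n) x"
    using lim[of x] by (rule order_tendstoD(1)[rotated])
  then have "\<forall>\<^sub>F n in sequentially. x \<notin> L n"
    by (rule eventually_mono) (rule trunc_dist_pos_imp_notin)
  then show ?thesis ..
qed

theorem quasiconvex_subseq_ae_convergent:
  fixes f :: "nat \<Rightarrow> 'a::euclidean_space \<Rightarrow> real" and A :: "'a set"
  assumes sublevel_convex: "\<And>n c. convex {x\<in>A. f n x < c}"
    and bounded: "AE x in lebesgue. x \<in> A \<longrightarrow> (\<forall>n. \<bar>f n x\<bar> \<le> M)"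
  shows "\<exists>s \<phi>. strict_mono s \<and> (AE x in lebesgue. x \<in> A \<longrightarrow> (\<lambda>n. f (s n) x) \<longlonglongrightarrow> \<phi> x)"
proof -
  define L where "L c n = {x\<in>A. f n x < c}" for c n
  have "\<bar>trunc_dist (L c n) x\<bar> \<le> 1" for c n x
    using trunc_dist_bounds[of "L c n" x] by simp
  then obtain s where s: "strict_mono s"
    and conv: "\<forall>c\<in>\<rat>. \<forall>x. convergent (\<lambda>n. trunc_dist (L c (s n)) x)"
    using lipschitz_family_subseq_convergent[OF countable_rat, of "\<lambda>c n. trunc_dist (L c n)" 1]
      trunc_dist_lipschitz by blast
  define E where "E c x = lim (\<lambda>n. trunc_dist (L c (s n)) x)" for c x
  have lim: "(\<lambda>n. trunc_dist (L c (s n)) x) \<longlonglongrightarrow> E c x" if "c \<in> \<rat>" for c x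
    using conv that by (simp add: E_def convergent_LIMSEQ_iff)
  have L_convex: "convex (L c (s n))" for c n
    using sublevel_convex by (simp add: L_def)
  have decided: "(\<forall>\<^sub>F n in sequentially. x \<in> L c (s n)) \<or> (\<forall>\<^sub>F n in sequentially. x \<notin> L c (s n))"
    if "c \<in> \<rat>" "x \<notin> frontier {x. E c x = 0}" for c x
    using trunc_dist_limit_decides_membership[where L="\<lambda>n. L c (s n)" and E="E c",
        OF L_convex lim[OF that(1)] that(2)] .
  have "AE x in lebesgue. \<forall>c\<in>\<rat>. x \<notin> frontier {x. E c x = 0}"
  proof (subst AE_ball_countable[OF countable_rat], intro ballI AE_not_in)
    fix c :: real assume "c \<in> \<rat>"
    then have "negligible (frontier {x. E c x = 0})"
      using trunc_dist_limit_zero_set_convex[where L="\<lambda>n. L c (s n)" and E="E c",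
          OF L_convex lim[OF \<open>c \<in> \<rat>\<close>]]
      by (intro negligible_convex_frontier)
    then show "frontier {x. E c x = 0} \<in> null_sets lebesgue"
      by (simp add: negligible_iff_null_sets)
  qed
  with bounded have "AE x in lebesgue. x \<in> A \<longrightarrow> convergent (\<lambda>n. f (s n) x)"
  proof eventually_elim
    case (elim x)
    show ?case
    proof
      assume x: "x \<in> A"
      show "convergent (\<lambda>n. f (s n) x)"
      proof (rule convergent_if_eventually_decided)
        show "\<bar>f (s n) x\<bar> \<le> M" for n
          using elim(1) x by blast
        fix c :: real assume c: "c \<in> \<rat>"
        from decided[OF c] elim(2) c
        show "(\<forall>\<^sub>F n in sequentially. f (s n) x < c) \<or> (\<forall>\<^sub>F n in sequentially. c \<le> f (s n) x)"
          unfolding L_def using x by (auto simp: not_less elim!: eventually_mono)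
      qed
    qed
  qed
  then have "AE x in lebesgue. x \<in> A \<longrightarrow> (\<lambda>n. f (s n) x) \<longlonglongrightarrow> lim (\<lambda>n. f (s n) x)"
    by (simp add: convergent_LIMSEQ_iff)
  with s show ?thesis
    by (intro exI[of _ s] exI[of _ "\<lambda>x. lim (\<lambda>n. f (s n) x)"]) simp
qed

lemma convex_on_sublevel_mono_comp:
  fixes g :: "real \<Rightarrow> 'b::linorder"
  assumes A: "convex A" and W: "convex_on A W" and g: "mono_on (W ` A) g"
  shows "convex {x\<in>A. g (W x) < c}"
proof (rule convexI)
  fix x y :: 'a and u v :: real
  assume x: "x \<in> {x\<in>A. g (W x) < c}" and y: "y \<in> {x\<in>A. g (W x) < c}"
    and uv: "0 \<le> u" "0 \<le> v" "u + v = 1"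
  define z where "z = u *\<^sub>R x + v *\<^sub>R y"
  have zA: "z \<in> A"
    using x y uv A by (auto simp: z_def convex_def)
  have "W z \<le> u * W x + v * W y"
    using W x y uv by (auto simp: z_def convex_on_def)
  also have "\<dots> \<le> u * max (W x) (W y) + v * max (W x) (W y)"
    using uv by (intro add_mono mult_left_mono) auto
  also have "\<dots> = max (W x) (W y)"
    using uv by (simp add: distrib_right[symmetric])
  finally have "g (W z) \<le> g (max (W x) (W y))"
    using x y zA by (intro mono_onD[OF g]) (auto simp: max_def)
  also have "\<dots> < c"
    using x y by (simp add: max_def)
  finally show "u *\<^sub>R x + v *\<^sub>R y \<in> {x\<in>A. g (W x) < c}"
    using zA by (simp add: z_def)
qed

lemma phi_of_sublevel_convex:
  assumes "convex A" "convex_on A W" "\<And>x. x \<in> A \<Longrightarrow> 0 \<le> W x" "0 \<le> t"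
  shows "convex {x\<in>A. phi_of W t x < c}"
proof -
  have "mono_on (W ` A) (\<lambda>w. ((t + 2) * w) powr (1 / (t + 2)))"
    using assms(3,4) by (auto intro!: mono_onI powr_mono2 mult_left_mono)
  from convex_on_sublevel_mono_comp[OF assms(1,2) this] show ?thesis
    by (simp add: phi_of_def)
qed

text \<open>Gradient inequality for a convex function at a point of differentiability, also at boundary
  points of its domain (only one-sided difference quotients along segments into A are used).\<close>
lemma convex_on_gradient_inequality:
  fixes W :: "'a::real_inner \<Rightarrow> real"
  assumes convex: "convex_on A W" and x: "x \<in> A" and y: "y \<in> A"
    and deriv: "(W has_derivative (\<lambda>h. g \<bullet> h)) (at x)"
  shows "W x + g \<bullet> (y - x) \<le> W y"
proof -
  define h where "h s = W (x + s *\<^sub>R (y - x))" for s :: real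
  have "((\<lambda>s. x + s *\<^sub>R (y - x)) has_derivative (\<lambda>s. s *\<^sub>R (y - x))) (at 0)"
    by (auto intro!: derivative_eq_intros)
  moreover have "(W has_derivative (\<lambda>h. g \<bullet> h)) (at (x + 0 *\<^sub>R (y - x)))"
    using deriv by simp
  ultimately have "(h has_derivative (\<lambda>s. g \<bullet> (s *\<^sub>R (y - x)))) (at 0)"
    unfolding h_def[abs_def] by (rule diff_chain_at[unfolded o_def])
  then have "(h has_field_derivative (g \<bullet> (y - x))) (at 0)"
    by (simp add: has_field_derivative_def mult_commute_abs)
  then have lim: "((\<lambda>s. (h s - h 0) / (s - 0)) \<longlongrightarrow> g \<bullet> (y - x)) (at_right 0)"
    by (simp add: has_field_derivative_iff filterlim_at_split)
  have "(h s - h 0) / (s - 0) \<le> W y - W x" if s: "0 < s" "s < 1" for s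
  proof -
    have "x + s *\<^sub>R (y - x) = (1 - s) *\<^sub>R x + s *\<^sub>R y"
      by (simp add: algebra_simps)
    then have "h s \<le> (1 - s) * W x + s * W y"
      using convex_onD[OF convex, of s x y] s x y by (simp add: h_def)
    then have "h s - h 0 \<le> s * (W y - W x)"
      by (simp add: h_def algebra_simps)
    then show ?thesis
      using s by (simp add: divide_le_eq mult.commute)
  qed
  then have "\<forall>\<^sub>F s in at_right 0. (h s - h 0) / (s - 0) \<le> W y - W x"
    unfolding eventually_at_right[OF zero_less_one] by (intro exI[of _ 1]) auto
  with lim have "g \<bullet> (y - x) \<le> W y - W x"
    by (rule tendsto_upperbound) simp
  then show ?thesis by simp
qed

lemma norm_S_pow: "norm (S_pow t x) = norm x powr t * norm x"
  by (simp add: S_pow_def)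

lemma S_pow_measurable: "S_pow t \<in> borel_measurable (density lebesgue f)"
proof -
  have "S_pow t \<in> borel_measurable (borel :: 'a::euclidean_space measure)"
    unfolding S_pow_def[abs_def] by measurable
  then have "S_pow t \<in> borel_measurable (lebesgue :: 'a measure)"
    by (simp add: measurable_completion)
  then show ?thesis
    by (simp add: measurable_density_eq1)
qed

text \<open>The Brenier gradient pushes mu onto the image of nu under S_t, which lives in the ball of
  radius r^(t+1); hence the gradient is mu-a.e. bounded by r^(t+1).\<close>
lemma brenier_gradient_bound:
  fixes W :: "'a::euclidean_space \<Rightarrow> real"
  assumes brenier: "brenier_potential A rho0 rho1 t W" and t: "0 \<le> t"
    and rho1_meas: "rho1 \<in> borel_measurable lebesgue"
    and rho1_supp: "\<And>y. y \<notin> cball 0 r \<Longrightarrow> rho1 y = 0"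
  shows "AE x in density lebesgue (\<lambda>x. ennreal (rho0 x)).
           \<exists>g. norm g \<le> r powr t * r \<and> (W has_derivative (\<lambda>h. g \<bullet> h)) (at x)"
proof -
  let ?\<mu> = "density lebesgue (\<lambda>x. ennreal (rho0 x))"
  let ?\<nu> = "density lebesgue (\<lambda>x. ennreal (rho1 x))"
  let ?R = "r powr t * r"
  obtain G where G_meas: "G \<in> borel_measurable ?\<mu>"
    and G_deriv: "AE x in ?\<mu>. (W has_derivative (\<lambda>h. G x \<bullet> h)) (at x)"
    and push: "distr ?\<mu> borel G = distr ?\<nu> borel (S_pow t)"
    using brenier unfolding brenier_potential_def by blast
  have closed_ball: "{z \<in> space borel. norm z \<le> ?R} \<in> sets (borel :: 'a measure)"
    by measurable
  have "AE y in ?\<nu>. norm (S_pow t y) \<le> ?R"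
  proof (subst AE_density)
    show "AE y in lebesgue. 0 < ennreal (rho1 y) \<longrightarrow> norm (S_pow t y) \<le> ?R"
    proof (rule AE_I2, rule impI)
      fix y :: 'a assume "0 < ennreal (rho1 y)"
      then have "norm y \<le> r"
        using rho1_supp[of y] by (cases "y \<in> cball 0 r") auto
      then show "norm (S_pow t y) \<le> ?R"
        unfolding norm_S_pow using t by (intro mult_mono powr_mono2) auto
    qed
  qed (use rho1_meas in simp)
  then have "AE z in distr ?\<mu> borel G. norm z \<le> ?R"
    unfolding push by (subst AE_distr_iff[OF S_pow_measurable closed_ball])
  then have "AE x in ?\<mu>. norm (G x) \<le> ?R"
    by (subst (asm) AE_distr_iff[OF G_meas closed_ball])
  with G_deriv show ?thesis
    by eventually_elim blast
qed

text \<open>By the gradient inequality at x towards a minimiser x0 (where W vanishes), W is a.e. on A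
  bounded by the gradient bound times the diameter of A.\<close>
lemma brenier_potential_upper_bound:
  fixes W :: "'a::euclidean_space \<Rightarrow> real"
  assumes brenier: "brenier_potential A rho0 rho1 t W" and t: "0 \<le> t" and A: "bounded A"
    and rho0_meas: "rho0 \<in> borel_measurable lebesgue"
    and rho0_pos: "AE x in lebesgue. x \<in> A \<longrightarrow> 0 < rho0 x"
    and rho1_meas: "rho1 \<in> borel_measurable lebesgue"
    and rho1_supp: "\<And>y. y \<notin> cball 0 r \<Longrightarrow> rho1 y = 0"
  shows "AE x in lebesgue. x \<in> A \<longrightarrow> W x \<le> r powr t * r * diameter A"
proof -
  have convex: "convex_on A W" and "\<exists>x0\<in>A. W x0 = 0"
    using brenier by (auto simp: brenier_potential_def)
  then obtain x0 where x0: "x0 \<in> A" "W x0 = 0" by blast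
  have "AE x in lebesgue. 0 < ennreal (rho0 x) \<longrightarrow>
          (\<exists>g. norm g \<le> r powr t * r \<and> (W has_derivative (\<lambda>h. g \<bullet> h)) (at x))"
    using brenier_gradient_bound[OF brenier t rho1_meas rho1_supp] rho0_meas
    by (subst (asm) AE_density) auto
  with rho0_pos show ?thesis
  proof eventually_elim
    case (elim x)
    show ?case
    proof
      assume x: "x \<in> A"
      then obtain g where g: "norm g \<le> r powr t * r" "(W has_derivative (\<lambda>h. g \<bullet> h)) (at x)"
        using elim by auto
      have "W x \<le> g \<bullet> (x - x0)"
        using convex_on_gradient_inequality[OF convex x x0(1) g(2)] x0(2)
        by (simp add: inner_diff_right)
      also have "\<dots> \<le> norm g * norm (x - x0)"
        by (rule norm_cauchy_schwarz)
      also have "\<dots> \<le> r powr t * r * diameter A"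
        using g(1) diameter_bounded_bound[OF A x x0(1)]
        by (intro mult_mono) (auto simp: dist_norm order_trans[OF norm_ge_zero g(1)])
      finally show "W x \<le> r powr t * r * diameter A" .
    qed
  qed
qed

lemma phi_of_bound:
  fixes w r D :: real
  assumes w: "0 \<le> w" "w \<le> r powr real n * r * D" and r: "0 \<le> r" and D: "0 \<le> D"
  shows "((real n + 2) * w) powr (1 / (real n + 2)) \<le> 2 * max 1 (max r D)"
proof -
  define K where "K = max 1 (max r D)"
  define t where "t = real n + 2"
  have K: "1 \<le> K" "r \<le> K" "D \<le> K" and t: "0 < t"
    by (auto simp: K_def t_def)
  have "r powr real n \<le> K powr real n"
    using r K(2) by (simp add: powr_mono2)
  then have "r powr real n * r * D \<le> K powr real n * K * K"
    using r D K by (simp add: mult_mono)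
  with w(2) have "w \<le> K powr real n * K * K"
    by linarith
  also have "\<dots> = K powr t"
    using K(1) by (simp add: t_def powr_add powr_numeral power2_eq_square)
  finally have wK: "w \<le> K powr t" .
  have "real (n + 2) < 2 ^ (n + 2)"
    by (rule of_nat_less_two_power)
  then have t_le: "t \<le> 2 powr t"
    by (simp add: t_def powr_add powr_realpow)
  have "t * w \<le> 2 powr t * K powr t"
    using wK t_le w(1) by (intro mult_mono) auto
  also have "\<dots> = (2 * K) powr t"
    using K(1) by (simp add: powr_mult)
  finally have "(t * w) powr (1 / t) \<le> ((2 * K) powr t) powr (1 / t)"
    using w(1) t by (intro powr_mono2) auto
  also have "\<dots> = 2 * K"
    using K(1) t by (simp add: powr_powr)
  finally show ?thesis
    by (simp add: t_def K_def)
qed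

lemma brenier_phi_bound:
  fixes W :: "'a::euclidean_space \<Rightarrow> real"
  assumes brenier: "brenier_potential A rho0 rho1 (real n) W" and A: "bounded A"
    and rho0_meas: "rho0 \<in> borel_measurable lebesgue"
    and rho0_pos: "AE x in lebesgue. x \<in> A \<longrightarrow> 0 < rho0 x"
    and rho1_meas: "rho1 \<in> borel_measurable lebesgue"
    and rho1_supp: "\<And>y. y \<notin> cball 0 r \<Longrightarrow> rho1 y = 0" and r: "0 \<le> r"
  shows "AE x in lebesgue. x \<in> A \<longrightarrow> \<bar>phi_of W (real n) x\<bar> \<le> 2 * max 1 (max r (diameter A))"
proof -
  have "AE x in lebesgue. x \<in> A \<longrightarrow> W x \<le> r powr real n * r * diameter A"
    by (rule brenier_potential_upper_bound[OF brenier _ A rho0_meas rho0_pos rho1_meas rho1_supp])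
      simp
  then show ?thesis
  proof eventually_elim
    case (elim x)
    show ?case
    proof
      assume x: "x \<in> A"
      have "0 \<le> W x"
        using brenier x by (simp add: brenier_potential_def)
      then show "\<bar>phi_of W (real n) x\<bar> \<le> 2 * max 1 (max r (diameter A))"
        using phi_of_bound[of "W x" r n "diameter A"] elim x r diameter_ge_0[OF A]
        by (simp add: phi_of_def)
    qed
  qed
qed

theorem corollary3:
  fixes A :: "'a::euclidean_space set"
    and rho0 rho1 :: "'a \<Rightarrow> real"
    and r :: real
    and W :: "real \<Rightarrow> 'a \<Rightarrow> real"
  assumes dim: "DIM('a) \<ge> 2"
    and A: "compact A" "convex A"
    and rho0_meas: "rho0 \<in> borel_measurable lebesgue"
    and rho0_nonneg: "\<And>x. 0 \<le> rho0 x"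
    and rho0_supp: "\<And>x. x \<notin> A \<Longrightarrow> rho0 x = 0"
    and rho0_pos: "AE x in lebesgue. x \<in> A \<longrightarrow> 0 < rho0 x"
    and mu_prob: "prob_space (density lebesgue (\<lambda>x. ennreal (rho0 x)))"
    and rho1_meas: "rho1 \<in> borel_measurable lebesgue"
    and rho1_nonneg: "\<And>x. 0 \<le> rho1 x"
    and rho1_supp: "\<And>x. x \<notin> cball 0 r \<Longrightarrow> rho1 x = 0"
    and rho1_pos: "AE x in lebesgue. x \<in> cball 0 r \<longrightarrow> 0 < rho1 x"
    and nu_prob: "prob_space (density lebesgue (\<lambda>x. ennreal (rho1 x)))"
    and W: "\<And>t. 0 \<le> t \<Longrightarrow> brenier_potential A rho0 rho1 t (W t)"
  shows "\<exists>(tn :: nat \<Rightarrow> real) (\<phi> :: 'a \<Rightarrow> real).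
           filterlim tn at_top sequentially \<and>
           (AE x in lebesgue. x \<in> A \<longrightarrow>
              (\<lambda>n. phi_of (W (tn n)) (tn n) x) \<longlonglongrightarrow> \<phi> x)"
proof -
  define r' where "r' = max r 0"
  have supp: "\<And>y. y \<notin> cball 0 r' \<Longrightarrow> rho1 y = 0"
    using rho1_supp by (auto simp: r'_def)
  define f where "f n = phi_of (W (real n)) (real n)" for n
  have brenier: "brenier_potential A rho0 rho1 (real n) (W (real n))" for n
    using W by simp
  have sublevel: "convex {x\<in>A. f n x < c}" for n c
    using brenier[of n] A(2) unfolding f_def brenier_potential_def
    by (intro phi_of_sublevel_convex) auto
  have bound: "AE x in lebesgue. x \<in> A \<longrightarrow> \<bar>f n x\<bar> \<le> 2 * max 1 (max r' (diameter A))" for n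
    unfolding f_def using compact_imp_bounded[OF A(1)] rho0_meas rho0_pos rho1_meas supp
    by (intro brenier_phi_bound[OF brenier]) (auto simp: r'_def)
  have "AE x in lebesgue. \<forall>n. x \<in> A \<longrightarrow> \<bar>f n x\<bar> \<le> 2 * max 1 (max r' (diameter A))"
    unfolding AE_all_countable using bound by blast
  then have "AE x in lebesgue. x \<in> A \<longrightarrow> (\<forall>n. \<bar>f n x\<bar> \<le> 2 * max 1 (max r' (diameter A)))"
    by eventually_elim blast
  then obtain s \<phi> where s: "strict_mono s"
    and lim: "AE x in lebesgue. x \<in> A \<longrightarrow> (\<lambda>n. f (s n) x) \<longlonglongrightarrow> \<phi> x"
    using quasiconvex_subseq_ae_convergent[where f = f and A = A, OF sublevel] by blast
  have "filterlim (\<lambda>n. real (s n)) at_top sequentially"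
    using filterlim_compose[OF filterlim_real_sequentially filterlim_subseq[OF s]]
    by (simp add: o_def)
  with lim show ?thesis
    unfolding f_def by blast
qed

end
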